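(* Let $\boldsymbol{S}\in\mathrm{Mat}(M,M,\mathbb{C})$ be invertible, $\boldsymbol{U}\in\mathrm{Mat}(m,M,\mathbb{C})$, $\boldsymbol{V}\in\mathrm{Mat}(M,m,\mathbb{C})$, let $\boldsymbol{K}\in\mathrm{Mat}(M,M,\mathbb{C})$ be invertible with $\boldsymbol{S}\boldsymbol{K}+\boldsymbol{K}\boldsymbol{S}=\boldsymbol{V}\boldsymbol{U}$, and let $p_0\in\mathrm{Mat}(m,m,\mathbb{C})$. Define the reflected data $$\boldsymbol{S}'=-\boldsymbol{S},\quad \boldsymbol{K}'=-\boldsymbol{K}^{-1},\quad \boldsymbol{V}'=\boldsymbol{K}^{-1}\boldsymbol{V},\quad \boldsymbol{U}'=\boldsymbol{U}\boldsymbol{K}^{-1},\quad p_0'=p_0-\boldsymbol{U}\boldsymbol{K}^{-1}\boldsymbol{V}.$$ Then $\boldsymbol{S}'\boldsymbol{K}'+\boldsymbol{K}'\boldsymbol{S}'=\boldsymbol{V}'\boldsymbol{U}'$, and the pair $(q,p)$ built from $(\boldsymbol{S},\boldsymbol{K},\boldsymbol{U},\boldsymbol{V},p_0)$ by the formulas $$q=\boldsymbol{U}\boldsymbol{\Xi}\,(\boldsymbol{I}_M+(\boldsymbol{K}\boldsymbol{\Xi})^2)^{-1}\boldsymbol{V},\qquad p=p_0-\boldsymbol{U}\boldsymbol{\Xi}\boldsymbol{K}\boldsymbol{\Xi}\,(\boldsymbol{I}_M+(\boldsymbol{K}\boldsymbol{\Xi})^2)^{-1}\boldsymbol{V},\qquad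 \boldsymbol{\Xi}=e^{-\boldsymbol{S}x-\boldsymbol{S}^{-1}y},$$ coincides with the pair $(q',p')$ built by the same formulas from $(\boldsymbol{S}',\boldsymbol{K}',\boldsymbol{U}',\boldsymbol{V}',p_0')$ (with $\boldsymbol{\Xi}'=e^{-\boldsymbol{S}'x-\boldsymbol{S}'^{-1}y}$), at all points where the relevant inverses exist.
   Context: $\boldsymbol{I}_M$ is the $M\times M$ identity matrix and $e^{(\cdot)}$ is the matrix exponential; $x,y$ are real variables. *)

theory Defs
  imports "HOL-Analysis.Analysis"
begin

primrec mat_pow :: "'a::comm_semiring_1^'n^'n \<Rightarrow> nat \<Rightarrow> 'a^'n^'n" where
  "mat_pow A 0 = mat 1"
| "mat_pow A (Suc k) = A ** mat_pow A k"

definition mat_exp :: "complex^'n^'n \<Rightarrow> complex^'n^'n" where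
  "mat_exp A = (\<Sum>k. scaleR (1 / fact k) (mat_pow A k))"

definition Xi :: "complex^'M^'M \<Rightarrow> real \<Rightarrow> real \<Rightarrow> complex^'M^'M" where
  "Xi S x y = mat_exp (- scaleR x S - scaleR y (matrix_inv S))"

definition q_of :: "complex^'M^'M \<Rightarrow> complex^'M^'M \<Rightarrow> complex^'M^'m \<Rightarrow> complex^'m^'M
     \<Rightarrow> real \<Rightarrow> real \<Rightarrow> complex^'m^'m" where
  "q_of S K U V x y =
     (let X = Xi S x y in
      U ** X ** matrix_inv (mat 1 + (K ** X) ** (K ** X)) ** V)"

definition p_of :: "complex^'M^'M \<Rightarrow> complex^'M^'M \<Rightarrow> complex^'M^'m \<Rightarrow> complex^'m^'M
     \<Rightarrow> complex^'m^'m \<Rightarrow> real \<Rightarrow> real \<Rightarrow> complex^'m^'m" where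
  "p_of S K U V p0 x y =
     (let X = Xi S x y in
      p0 - U ** X ** K ** X ** matrix_inv (mat 1 + (K ** X) ** (K ** X)) ** V)"

end

theory Submission
  imports Defs
begin

(*
  Analytically, the only fact needed
  about the matrix exponential is exp(A) exp(-A) = 1; it is proved entrywise from the
  power series by the Cauchy product and the alternating binomial sum.  Since
  (-S)\<inverse> = -S\<inverse>, it shows that the reflected \<Xi>' is the inverse of \<Xi>.
  Algebraically, writing X = \<Xi>, Y = X\<inverse>, Ki = K\<inverse>, P = 1 + (K X)^2 and
  P' = 1 + (Ki Y)^2, one has Ki P = P' X K X; this yields the two resolvent identities
    Ki Y P'\<inverse> Ki = X P\<inverse>    and    Ki P\<inverse> + X K X P\<inverse> = Ki,
  which are exactly the equalities q = q' and p = p' after multiplying by U and V.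
  These identities are proved over an arbitrary commutative ring with one-sided inverses
  only; the main theorem instantiates them with \<Xi>, its inverse and matrix_inv.
*)

lemma matrix_mult_entry: "(A ** B) $ i $ j = (\<Sum>l\<in>UNIV. A $ i $ l * B $ l $ j)"
  by (simp add: matrix_matrix_mult_def)

lemma matrix_add_rdistrib: "((A::'a::semiring_1^'n^'m) + B) ** C = A ** C + B ** C"
  by (simp add: vec_eq_iff matrix_matrix_mult_def sum.distrib distrib_right)

lemma matrix_neg_left: "(- (A::'a::ring_1^'n^'m)) ** B = - (A ** B)"
  by (simp add: vec_eq_iff matrix_matrix_mult_def sum_negf)

lemma matrix_neg_right: "(A::'a::ring_1^'n^'m) ** (- B) = - (A ** B)"
  by (simp add: vec_eq_iff matrix_matrix_mult_def sum_negf)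

lemma matrix_inv_right: "invertible (A::'a::semiring_1^'n^'n) \<Longrightarrow> A ** matrix_inv A = mat 1"
  and matrix_inv_left: "invertible (A::'a::semiring_1^'n^'n) \<Longrightarrow> matrix_inv A ** A = mat 1"
  unfolding invertible_def matrix_inv_def by (metis (mono_tags, lifting) someI_ex)+

lemma matrix_inv_unique:
  fixes A B :: "'a::semiring_1^'n^'n"
  assumes "A ** B = mat 1" and "B ** A = mat 1"
  shows "matrix_inv A = B"
proof -
  have "invertible A" using assms unfolding invertible_def by blast
  then have "matrix_inv A = matrix_inv A ** (A ** B)" using assms(1) by simp
  also have "\<dots> = B" by (simp add: matrix_mul_assoc matrix_inv_left[OF \<open>invertible A\<close>])
  finally show ?thesis .
qed

lemma matrix_inv_uminus:
  assumes "invertible (A::'a::ring_1^'n^'n)"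
  shows "matrix_inv (- A) = - matrix_inv A"
  by (rule matrix_inv_unique)
     (simp_all add: matrix_neg_left matrix_neg_right matrix_inv_left[OF assms] matrix_inv_right[OF assms])

section \<open>The matrix exponential of \<open>-A\<close> inverts that of \<open>A\<close>\<close>

lemma mat_pow_add: "mat_pow A k ** mat_pow A m = mat_pow A (k + m)"
  by (induction k) (simp_all add: matrix_mul_assoc[symmetric])

lemma mat_pow_uminus:
  "mat_pow (- (A::'a::{comm_ring_1,real_algebra_1}^'n^'n)) m = (-1) ^ m *\<^sub>R mat_pow A m"
  by (induction m) (simp_all add: matrix_neg_left matrix_scalar_ac scalar_matrix_assoc[symmetric])

lemma mat_pow_entry_bound:
  fixes A :: "complex^'n^'n"
  shows "norm (mat_pow A k $ i $ j) \<le> (\<Sum>a\<in>UNIV. \<Sum>b\<in>UNIV. norm (A $ a $ b)) ^ k"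
proof (induction k arbitrary: i j)
  case 0
  then show ?case by (simp add: mat_def)
next
  case (Suc k)
  define c where "c = (\<Sum>a\<in>UNIV. \<Sum>b\<in>UNIV. norm (A $ a $ b))"
  have c0: "0 \<le> c" unfolding c_def by (intro sum_nonneg) auto
  have row_le: "(\<Sum>l\<in>UNIV. norm (A $ i $ l)) \<le> c"
    unfolding c_def
    by (rule member_le_sum[where f="\<lambda>a. \<Sum>b\<in>UNIV. norm (A $ a $ b)"]) (auto intro: sum_nonneg)
  have "norm (mat_pow A (Suc k) $ i $ j) \<le> (\<Sum>l\<in>UNIV. norm (A $ i $ l) * norm (mat_pow A k $ l $ j))"
    by (simp add: matrix_mult_entry norm_sum norm_mult order_trans[OF norm_sum])
  also have "\<dots> \<le> (\<Sum>l\<in>UNIV. norm (A $ i $ l) * c ^ k)"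
    using Suc.IH by (intro sum_mono mult_left_mono) (simp_all add: c_def)
  also have "\<dots> \<le> c * c ^ k"
    using row_le c0 by (simp add: sum_distrib_right[symmetric] mult_right_mono)
  finally show ?case by (simp add: c_def)
qed

lemma exp_series_entry_summable:
  fixes A :: "complex^'n^'n"
  shows "summable (\<lambda>k. norm (((1 / fact k) *\<^sub>R mat_pow A k) $ i $ j))"
proof (rule summable_comparison_test'[OF summable_exp[of "\<Sum>a\<in>UNIV. \<Sum>b\<in>UNIV. norm (A $ a $ b)"]])
  fix k :: nat
  show "norm (norm (((1 / fact k) *\<^sub>R mat_pow A k) $ i $ j))
      \<le> inverse (fact k) * (\<Sum>a\<in>UNIV. \<Sum>b\<in>UNIV. norm (A $ a $ b)) ^ k"
    using mat_pow_entry_bound[of A k i j] by (simp add: divide_inverse mult_left_mono)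
qed

lemma sums_entrywise:
  fixes f :: "nat \<Rightarrow> 'a::real_normed_vector^'n^'m"
  assumes "\<And>i j. summable (\<lambda>k. f k $ i $ j)"
  shows "f sums (\<chi> i j. \<Sum>k. f k $ i $ j)"
  unfolding sums_def
  by (intro vec_tendstoI) (use assms in \<open>simp add: sum_component summable_LIMSEQ\<close>)

lemma mat_exp_entry:
  fixes A :: "complex^'n^'n"
  shows "mat_exp A $ i $ j = (\<Sum>k. ((1 / fact k) *\<^sub>R mat_pow A k) $ i $ j)"
proof -
  let ?a = "\<lambda>k. (1 / fact k) *\<^sub>R mat_pow A k"
  have "?a sums (\<chi> i j. \<Sum>k. ?a k $ i $ j)"
    by (rule sums_entrywise) (rule summable_norm_cancel[OF exp_series_entry_summable])
  then show ?thesis unfolding mat_exp_def by (simp add: sums_iff)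
qed

text \<open>The \<open>n\<close>-th coefficient of the Cauchy product of the series of \<open>exp A\<close> and
  \<open>exp (-A)\<close> is \<open>A^n/n! \<Sum>\<^sub>k binom n k (-1)^(n-k) = A^n/n! (1 - 1)^n\<close>.\<close>

lemma exp_series_cauchy_coeff:
  fixes A :: "complex^'n^'n"
  shows "(\<Sum>k\<le>n. ((1 / fact k) *\<^sub>R mat_pow A k) ** ((1 / fact (n - k)) *\<^sub>R mat_pow (- A) (n - k)))
       = (if n = 0 then mat 1 else 0)"
proof -
  have "(\<Sum>k\<le>n. (-1) ^ (n - k) / (fact k * fact (n - k)) :: real)
      = (\<Sum>k\<le>n. of_nat (n choose k) * 1 ^ k * (-1) ^ (n - k)) / fact n"
    by (simp add: sum_divide_distrib binomial_fact)
  also have "\<dots> = (1 + (-1::real)) ^ n / fact n"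
    by (simp only: binomial_ring)
  finally have binomial_sum:
    "(\<Sum>k\<le>n. (-1) ^ (n - k) / (fact k * fact (n - k)) :: real) = (if n = 0 then 1 else 0)"
    by simp
  have "(\<Sum>k\<le>n. ((1 / fact k) *\<^sub>R mat_pow A k) ** ((1 / fact (n - k)) *\<^sub>R mat_pow (- A) (n - k)))
      = (\<Sum>k\<le>n. ((-1) ^ (n - k) / (fact k * fact (n - k))) *\<^sub>R mat_pow A n)"
    by (intro sum.cong refl)
       (auto simp: mat_pow_uminus scalar_matrix_assoc[symmetric] matrix_scalar_ac mat_pow_add)
  also have "\<dots> = (if n = 0 then mat 1 else 0)"
    by (simp add: scaleR_sum_left[symmetric] binomial_sum)
  finally show ?thesis .
qed

theorem mat_exp_uminus_right: "mat_exp (A::complex^'n^'n) ** mat_exp (- A) = mat 1"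
proof -
  define a where "a = (\<lambda>k. (1 / fact k) *\<^sub>R mat_pow A k)"
  define b where "b = (\<lambda>k. (1 / fact k) *\<^sub>R mat_pow (- A) k)"
  have sa: "summable (\<lambda>k. norm (a k $ i $ l))" for i l
    unfolding a_def by (rule exp_series_entry_summable)
  have sb: "summable (\<lambda>k. norm (b k $ l $ j))" for l j
    unfolding b_def by (rule exp_series_entry_summable)
  have coeff: "(\<Sum>k\<le>n. a k ** b (n - k)) = (if n = 0 then mat 1 else 0)" for n
    unfolding a_def b_def by (rule exp_series_cauchy_coeff)
  have "(mat_exp A ** mat_exp (- A)) $ i $ j = mat 1 $ i $ j" for i j
  proof -
    have "(mat_exp A ** mat_exp (- A)) $ i $ j = (\<Sum>l\<in>UNIV. (\<Sum>k. a k $ i $ l) * (\<Sum>k. b k $ l $ j))"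
      by (simp add: matrix_mult_entry mat_exp_entry a_def b_def)
    also have "\<dots> = (\<Sum>l\<in>UNIV. \<Sum>n. \<Sum>k\<le>n. a k $ i $ l * b (n - k) $ l $ j)"
      using Cauchy_product[OF sa sb] by simp
    also have "\<dots> = (\<Sum>n. \<Sum>l\<in>UNIV. \<Sum>k\<le>n. a k $ i $ l * b (n - k) $ l $ j)"
      by (rule suminf_sum[symmetric]) (rule summable_Cauchy_product[OF sa sb])
    also have "\<dots> = (\<Sum>n. (\<Sum>k\<le>n. a k ** b (n - k)) $ i $ j)"
      by (simp add: matrix_mult_entry sum_component sum.swap[of _ UNIV])
    also have "\<dots> = (\<Sum>n. if n = 0 then mat 1 $ i $ j else 0)"
      by (simp add: coeff if_distrib[of "\<lambda>m. m $ i $ j"] zero_index cong: if_cong)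
    also have "\<dots> = mat 1 $ i $ j"
      by (rule sums_unique[symmetric]) (rule sums_single)
    finally show ?thesis .
  qed
  then show ?thesis by (simp add: vec_eq_iff)
qed

text \<open>Consequently, since \<open>(-S)\<inverse> = -S\<inverse>\<close>, the reflected \<open>\<Xi>\<close> (built from \<open>-S\<close>)
  is an inverse of \<open>\<Xi>\<close>; the algebra below only needs it as a left inverse.\<close>

lemma Xi_reflection_inverse:
  fixes S :: "complex^'M^'M"
  assumes "invertible S"
  shows "Xi (- S) x y ** Xi S x y = mat 1"
proof -
  let ?A = "- (x *\<^sub>R S) - y *\<^sub>R matrix_inv S"
  have "Xi (- S) x y = mat_exp (- ?A)"
    unfolding Xi_def matrix_inv_uminus[OF assms] by (simp add: algebra_simps)
  then show ?thesis
    unfolding Xi_def using mat_exp_uminus_right[of "- ?A"] by (simp only: minus_minus)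
qed

section \<open>Algebra of the reflection\<close>

text \<open>The Sylvester relation is preserved by \<open>S \<mapsto> -S\<close>, \<open>K \<mapsto> -K\<inverse>\<close>,
  \<open>U \<mapsto> U K\<inverse>\<close>, \<open>V \<mapsto> K\<inverse> V\<close>: conjugate \<open>S K + K S = V U\<close> by \<open>K\<inverse>\<close> on both sides.\<close>

lemma reflected_sylvester:
  fixes S K Ki :: "'a::comm_ring_1^'n^'n" and U :: "'a^'n^'m" and V :: "'a^'m^'n"
  assumes "K ** Ki = mat 1" and "Ki ** K = mat 1" and "S ** K + K ** S = V ** U"
  shows "(- S) ** (- Ki) + (- Ki) ** (- S) = (Ki ** V) ** (U ** Ki)"
proof -
  have "(Ki ** V) ** (U ** Ki) = Ki ** (S ** K + K ** S) ** Ki"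
    by (simp add: assms(3) matrix_mul_assoc)
  also have "\<dots> = (Ki ** S) ** (K ** Ki) + (Ki ** K) ** (S ** Ki)"
    by (simp add: matrix_add_ldistrib matrix_add_rdistrib matrix_mul_assoc)
  also have "\<dots> = S ** Ki + Ki ** S"
    by (simp add: assms(1,2) add.commute)
  finally show ?thesis by (simp add: matrix_neg_left matrix_neg_right)
qed

text \<open>Here
  \<open>M\<close> is a right inverse of \<open>P = 1 + (K X)\<^sup>2\<close> and \<open>M'\<close> a left inverse of
  \<open>P' = 1 + (Ki Y)\<^sup>2\<close>; the key relation is \<open>Ki P = P' X K X\<close>.\<close>

lemma resolvent_split:
  fixes K Ki X M :: "'a::comm_ring_1^'n^'n"
  assumes "Ki ** K = mat 1" and "(mat 1 + (K ** X) ** (K ** X)) ** M = mat 1"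
  shows "Ki ** M + X ** K ** X ** M = Ki"
proof -
  have "Ki ** (mat 1 + (K ** X) ** (K ** X)) = Ki + X ** K ** X"
    by (simp add: matrix_add_ldistrib matrix_mul_assoc assms(1))
  then have "Ki = (Ki + X ** K ** X) ** M"
    by (metis assms(2) matrix_mul_assoc matrix_mul_rid)
  then show ?thesis by (simp add: matrix_add_rdistrib)
qed

lemma reflected_resolvent:
  fixes K Ki X Y M M' :: "'a::comm_ring_1^'n^'n"
  assumes KiK: "Ki ** K = mat 1" and YX: "Y ** X = mat 1"
    and PM: "(mat 1 + (K ** X) ** (K ** X)) ** M = mat 1"
    and M'P': "M' ** (mat 1 + ((- Ki) ** Y) ** ((- Ki) ** Y)) = mat 1"
  shows "Ki ** Y ** M' ** Ki = X ** M"
proof -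
  have cancel: "Z ** Ki ** K = Z" "Z ** Y ** X = Z" for Z :: "'a^'n^'n"
    by (metis KiK YX matrix_mul_assoc matrix_mul_rid)+
  have key: "Ki ** (mat 1 + (K ** X) ** (K ** X))
           = (mat 1 + ((- Ki) ** Y) ** ((- Ki) ** Y)) ** (X ** K ** X)"
    by (simp add: matrix_add_ldistrib matrix_add_rdistrib matrix_neg_left matrix_neg_right
        matrix_mul_assoc cancel KiK add.commute)
  have "M' ** Ki = M' ** Ki ** (mat 1 + (K ** X) ** (K ** X)) ** M"
    by (metis PM matrix_mul_assoc matrix_mul_rid)
  also have "\<dots> = X ** K ** X ** M"
    by (metis key M'P' matrix_mul_assoc matrix_mul_lid)
  finally have "M' ** Ki = X ** K ** X ** M" .
  then show ?thesis
    by (metis matrix_mul_assoc cancel KiK matrix_mul_lid)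
qed

lemma reflection_identities:
  fixes K Ki X Y M M' :: "'a::comm_ring_1^'n^'n" and U :: "'a^'n^'m" and V :: "'a^'m^'n"
    and p0 :: "'a^'m^'m"
  assumes "Ki ** K = mat 1" and "Y ** X = mat 1"
    and "(mat 1 + (K ** X) ** (K ** X)) ** M = mat 1"
    and "M' ** (mat 1 + ((- Ki) ** Y) ** ((- Ki) ** Y)) = mat 1"
  shows "U ** X ** M ** V = (U ** Ki) ** Y ** M' ** (Ki ** V)"
    and "p0 - U ** X ** K ** X ** M ** V
       = (p0 - U ** Ki ** V) - (U ** Ki) ** Y ** (- Ki) ** Y ** M' ** (Ki ** V)"
proof -
  have res: "Ki ** Y ** M' ** Ki = X ** M"
    using reflected_resolvent[OF assms] .
  have "(U ** Ki) ** Y ** M' ** (Ki ** V) = U ** (Ki ** Y ** M' ** Ki) ** V"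
    by (simp add: matrix_mul_assoc)
  then show "U ** X ** M ** V = (U ** Ki) ** Y ** M' ** (Ki ** V)"
    by (simp add: res matrix_mul_assoc)
  have split: "U ** (Ki ** M) ** V + U ** (X ** K ** X ** M) ** V = U ** Ki ** V"
    using resolvent_split[OF assms(1,3)] by (metis matrix_add_ldistrib matrix_add_rdistrib)
  have "(U ** Ki) ** Y ** (- Ki) ** Y ** M' ** (Ki ** V) = - (U ** Ki ** Y ** (Ki ** Y ** M' ** Ki) ** V)"
    by (simp add: matrix_neg_left matrix_neg_right matrix_mul_assoc)
  also have "\<dots> = - (U ** Ki ** (Y ** X) ** M ** V)"
    by (simp add: res matrix_mul_assoc)
  also have "\<dots> = - (U ** (Ki ** M) ** V)"
    by (simp add: assms(2) matrix_mul_assoc)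
  also have "\<dots> = U ** (X ** K ** X ** M) ** V - U ** Ki ** V"
    using split[symmetric] by (simp add: algebra_simps)
  finally show "p0 - U ** X ** K ** X ** M ** V
       = (p0 - U ** Ki ** V) - (U ** Ki) ** Y ** (- Ki) ** Y ** M' ** (Ki ** V)"
    by (simp add: matrix_mul_assoc)
qed

theorem mainTheorem3:
  fixes S K :: "complex^'M^'M" and U :: "complex^'M^'m" and V :: "complex^'m^'M"
    and p0 :: "complex^'m^'m"
  assumes "invertible S" and "invertible K"
    and "S ** K + K ** S = V ** U"
  shows "(- S) ** (- matrix_inv K) + (- matrix_inv K) ** (- S)
           = (matrix_inv K ** V) ** (U ** matrix_inv K)
       \<and> (\<forall>x y.
            invertible (mat 1 + (K ** Xi S x y) ** (K ** Xi S x y))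
          \<and> invertible (mat 1 + ((- matrix_inv K) ** Xi (- S) x y) ** ((- matrix_inv K) ** Xi (- S) x y))
          \<longrightarrow> q_of S K U V x y = q_of (- S) (- matrix_inv K) (U ** matrix_inv K) (matrix_inv K ** V) x y
            \<and> p_of S K U V p0 x y
              = p_of (- S) (- matrix_inv K) (U ** matrix_inv K) (matrix_inv K ** V)
                     (p0 - U ** matrix_inv K ** V) x y)"
proof (intro conjI allI impI)
  show "(- S) ** (- matrix_inv K) + (- matrix_inv K) ** (- S)
      = (matrix_inv K ** V) ** (U ** matrix_inv K)"
    using reflected_sylvester matrix_inv_right matrix_inv_left assms by blast
next
  fix x y
  assume "invertible (mat 1 + (K ** Xi S x y) ** (K ** Xi S x y))
        \<and> invertible (mat 1 + ((- matrix_inv K) ** Xi (- S) x y) ** ((- matrix_inv K) ** Xi (- S) x y))"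
  then have PM: "(mat 1 + (K ** Xi S x y) ** (K ** Xi S x y))
                   ** matrix_inv (mat 1 + (K ** Xi S x y) ** (K ** Xi S x y)) = mat 1"
    and M'P': "matrix_inv (mat 1 + ((- matrix_inv K) ** Xi (- S) x y) ** ((- matrix_inv K) ** Xi (- S) x y))
                 ** (mat 1 + ((- matrix_inv K) ** Xi (- S) x y) ** ((- matrix_inv K) ** Xi (- S) x y)) = mat 1"
    using matrix_inv_right matrix_inv_left by blast+
  note identities = reflection_identities[OF matrix_inv_left[OF assms(2)]
      Xi_reflection_inverse[OF assms(1)] PM M'P']
  show "q_of S K U V x y = q_of (- S) (- matrix_inv K) (U ** matrix_inv K) (matrix_inv K ** V) x y"
    unfolding q_of_def Let_def by (rule identities(1))
  show "p_of S K U V p0 x y = p_of (- S) (- matrix_inv K) (U ** matrix_inv K) (matrix_inv K ** V)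
                               (p0 - U ** matrix_inv K ** V) x y"
    unfolding p_of_def Let_def by (rule identities(2))
qed

end
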